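(* Let $N$ be an odd prime and let $D$ be a square-free integer such that the Legendre symbol satisfies $\left(\frac{D}{N}\right) = -1$. Write $N + 1 = 2^s u$, where $u$ is an odd integer and $s \ge 1$. For any $w \in \mathcal{G}_N(D) \setminus \{1, -1\}$, one of the following conditions must hold: (a) $w^u \equiv 1 \pmod N$; (b) $w^{2^r u} \equiv -1 \pmod N$ for some integer $0 \le r < s$.
   Context: For an integer $n \ge 2$ and a square-free integer $D$: if $D \equiv 2,3 \pmod 4$, let $\mathcal{I}_n(D) = \{a + b\sqrt{D} : a,b \in \mathbb{Z}/n\mathbb{Z}\}$ (the ring $\mathbb{Z}[\sqrt D]/n\mathbb{Z}[\sqrt D]$) and $\mathcal{G}_n(D) = \{a + b\sqrt{D} \in \mathcal{I}_n(D) : a^2 - Db^2 \equiv 1 \pmod n\}$; if $D \equiv 1 \pmod 4$, let $\omega = \frac{1+\sqrt D}{2}$, $\mathcal{I}_n(D) = \{a + b\omega : a,b \in \mathbb{Z}/n\mathbb{Z}\}$ (the ring $\mathbb{Z}[\omega]/n\mathbb{Z}[\omega]$) and $\mathcal{G}_n(D) = \{a + b\omega \in \mathcal{I}_n(D) : a^2 + ab + \frac{1-D}{4} b^2 \equiv 1 \pmod n\}$. Powers are computed in $\mathcal{I}_n(D)$ and a congruence $x \equiv y \pmod n$ for $x,y \in \mathcal{I}_n(D)$ means equality in $\mathcal{I}_n(D)$. *)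

theory Defs
  imports "HOL-Number_Theory.Number_Theory" "HOL-Computational_Algebra.Squarefree"
begin

text \<open>Elements of I_n(D) are represented as pairs (a, b) of integers reduced mod n,
  standing for a + b sqrt D (if D mod 4 is 2 or 3) or a + b omega, omega = (1 + sqrt D)/2
  (if D mod 4 = 1).\<close>

type_synonym qelem = "int \<times> int"

definition qred :: "int \<Rightarrow> qelem \<Rightarrow> qelem" where
  "qred n x = (fst x mod n, snd x mod n)"

definition qmul :: "int \<Rightarrow> int \<Rightarrow> qelem \<Rightarrow> qelem \<Rightarrow> qelem" where
  "qmul n D x y =
     (let (a, b) = x; (c, d) = y in
      if D mod 4 = 1
      then qred n (a * c + b * d * ((D - 1) div 4), a * d + b * c + b * d)
      else qred n (a * c + D * b * d, a * d + b * c))"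

definition qone :: "int \<Rightarrow> qelem" where
  "qone n = qred n (1, 0)"

definition qneg_one :: "int \<Rightarrow> qelem" where
  "qneg_one n = qred n (-1, 0)"

fun qpow :: "int \<Rightarrow> int \<Rightarrow> qelem \<Rightarrow> nat \<Rightarrow> qelem" where
  "qpow n D x 0 = qone n"
| "qpow n D x (Suc k) = qmul n D x (qpow n D x k)"

definition qI :: "int \<Rightarrow> qelem set" where
  "qI n = {(a, b). 0 \<le> a \<and> a < n \<and> 0 \<le> b \<and> b < n}"

definition qnorm :: "int \<Rightarrow> qelem \<Rightarrow> int" where
  "qnorm D x = (let (a, b) = x in
     if D mod 4 = 1 then a^2 + a * b + ((1 - D) div 4) * b^2 else a^2 - D * b^2)"

definition qG :: "int \<Rightarrow> int \<Rightarrow> qelem set" where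
  "qG n D = {x \<in> qI n. [qnorm D x = 1] (mod n)}"

end

theory Submission
  imports Defs "HOL-Computational_Algebra.Polynomial"
begin

text \<open>Model \<open>\<I>\<^sub>N(D)\<close> as \<open>\<int>[X]/(N, X^2 - eX - k)\<close>. The discriminant \<open>e^2 + 4k\<close> (D or 4D) is
  a non-residue mod N, so this ring is a field and the Frobenius \<open>x \<mapsto> x^N\<close> is the
  conjugation \<open>X \<mapsto> e - X\<close>: for \<open>Y = 2X - e\<close> we have \<open>Y^2 = e^2 + 4k\<close>, and Euler's criterion
  gives \<open>Y^N = -Y\<close>. Hence \<open>w^(N+1) = w^N w\<close> is the norm of w, so \<open>w^(2^s u) = 1\<close> on
  \<open>\<G>\<^sub>N(D)\<close>. In a field the only square roots of 1 are \<open>\<plusminus>1\<close>, so going down the chain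
  \<open>w^(2^s u), w^(2^(s-1) u), \<dots>, w^u\<close> either all terms are 1 or some term is -1.\<close>

lemma of_prime_dvd_add_power_diff:
  fixes x y :: "'a::comm_ring_1"
  assumes "prime n"
  shows "of_nat n dvd (x + y) ^ n - x ^ n - y ^ n"
proof -
  let ?t = "\<lambda>k. of_nat (n choose k) * x ^ k * y ^ (n - k)"
  have n: "0 < n" using assms prime_gt_0_nat by blast
  have "{..n} = insert n (insert 0 {1..<n})" using n by auto
  then have "(x + y) ^ n = x ^ n + y ^ n + (\<Sum>k\<in>{1..<n}. ?t k)"
    using n by (simp add: binomial_ring add.assoc)
  moreover have "of_nat n dvd (\<Sum>k\<in>{1..<n}. ?t k)"
  proof (intro dvd_sum dvd_mult2)
    fix k assume "k \<in> {1..<n}"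
    then have "n dvd (n choose k)" using dvd_choose_prime assms by simp
    then show "of_nat n dvd (of_nat (n choose k) :: 'a)" by (elim dvdE) simp
  qed
  ultimately show ?thesis by simp
qed

lemma fermat_theorem_int:
  fixes p a :: int
  assumes "prime p" and "\<not> p dvd a"
  shows "[a ^ (nat p - 1) = 1] (mod p)"
proof -
  have "residues p" using assms(1) prime_gt_1_int by (unfold_locales) simp
  moreover have "coprime a p" using prime_imp_coprime[OF assms] by (simp add: coprime_commute)
  ultimately have "[a ^ totient (nat p) = 1] (mod p)" by (rule residues.euler_theorem)
  then show ?thesis using assms(1) by (simp add: totient_prime)
qed

lemma fermat_power_prime_int:
  fixes p a :: int
  assumes "prime p"
  shows "[a ^ nat p = a] (mod p)"
proof (cases "p dvd a")
  case True
  moreover have "0 < nat p" using assms prime_gt_0_int by simp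
  ultimately have "p dvd a ^ nat p" using dvd_power dvd_trans by blast
  then show ?thesis using True by (simp add: cong_iff_dvd_diff)
next
  case False
  have "a ^ nat p = a * a ^ (nat p - 1)"
    using assms prime_gt_0_int by (simp flip: power_Suc)
  then show ?thesis using cong_scalar_left[OF fermat_theorem_int[OF assms False], of a] by simp
qed

text \<open>Congruence modulo the ideal \<open>(N, f)\<close> of \<open>\<int>[X]\<close>; working in the ring \<open>\<int>[X]\<close> rather
  than on pairs mod N makes the binomial theorem available.\<close>

definition pcong :: "int \<Rightarrow> int poly \<Rightarrow> int poly \<Rightarrow> int poly \<Rightarrow> bool" where
  "pcong N f p q \<longleftrightarrow> (\<exists>A B. p - q = smult N A + f * B)"

lemma pcong_refl [simp]: "pcong N f p p"
  unfolding pcong_def by (rule exI[of _ 0], rule exI[of _ 0]) simp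

lemma pcong_sym: "pcong N f p q \<Longrightarrow> pcong N f q p"
  unfolding pcong_def by (metis (no_types, opaque_lifting) minus_diff_eq minus_add_distrib
      mult_minus_right smult_minus_right)

lemma pcong_trans [trans]: "pcong N f p q \<Longrightarrow> pcong N f q r \<Longrightarrow> pcong N f p r"
  unfolding pcong_def
proof (elim exE)
  fix A B A' B' assume "p - q = smult N A + f * B" "q - r = smult N A' + f * B'"
  then have "p - r = smult N (A + A') + f * (B + B')" by (simp add: algebra_simps smult_add_right)
  then show "\<exists>A B. p - r = smult N A + f * B" by blast
qed

lemma pcong_add: "pcong N f p q \<Longrightarrow> pcong N f p' q' \<Longrightarrow> pcong N f (p + p') (q + q')"
  unfolding pcong_def
proof (elim exE)
  fix A B A' B' assume "p - q = smult N A + f * B" "p' - q' = smult N A' + f * B'"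
  then have "p + p' - (q + q') = smult N (A + A') + f * (B + B')"
    by (simp add: algebra_simps smult_add_right)
  then show "\<exists>A B. p + p' - (q + q') = smult N A + f * B" by blast
qed

lemma pcong_mult: "pcong N f p q \<Longrightarrow> pcong N f p' q' \<Longrightarrow> pcong N f (p * p') (q * q')"
  unfolding pcong_def
proof (elim exE)
  fix A B A' B' assume AB: "p - q = smult N A + f * B" "p' - q' = smult N A' + f * B'"
  have "p * p' - q * q' = (p - q) * p' + q * (p' - q')" by (simp add: algebra_simps)
  also have "\<dots> = smult N (A * p' + q * A') + f * (B * p' + q * B')"
    unfolding AB by (simp add: algebra_simps smult_add_right)
  finally show "\<exists>A B. p * p' - q * q' = smult N A + f * B" by blast
qed

lemma pcong_power: "pcong N f p q \<Longrightarrow> pcong N f (p ^ n) (q ^ n)"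
  by (induction n) (simp_all add: pcong_mult)

lemma pcong_add_smult_modulus: "pcong N f (p + smult N A) p"
  unfolding pcong_def by (rule exI[of _ A], rule exI[of _ 0]) simp

lemma pcong_add_mult_modulus: "pcong N f (p + f * B) p"
  unfolding pcong_def by (rule exI[of _ 0], rule exI[of _ B]) simp

lemma pcong_const: "[a = b] (mod N) \<Longrightarrow> pcong N f [:a:] [:b:]"
  by (metis cong_iff_lin cong_sym pcong_add_smult_modulus smult_pCons smult_0_right pCons_0_0
      add_pCons add_0_right)

lemma pcong_smult_cancel:
  assumes "coprime c N" and "pcong N f (smult c p) (smult c q)"
  shows "pcong N f p q"
proof -
  obtain t where "[c * t = 1] (mod N)" using cong_solve_coprime_int[OF assms(1)] by blast
  then obtain m where m: "c * t = 1 + N * m" by (metis cong_iff_lin cong_sym)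
  have inv: "smult t (smult c r) = r + smult N (smult m r)" for r
    by (simp add: m mult.commute smult_add_left)
  have "pcong N f p (smult t (smult c p))" unfolding inv by (rule pcong_sym, rule pcong_add_smult_modulus)
  also have "pcong N f (smult t (smult c p)) (smult t (smult c q))"
    using pcong_mult[OF pcong_refl assms(2), of "[:t:]"] by (simp add: mult.commute)
  also have "pcong N f (smult t (smult c q)) q" unfolding inv by (rule pcong_add_smult_modulus)
  finally show ?thesis .
qed

lemma pcong_coeff:
  assumes "pcong N f p q"
    and "lead_coeff f = 1" and "degree p < degree f" and "degree q < degree f"
  shows "[coeff p i = coeff q i] (mod N)"
proof -
  obtain A B where AB: "p - q = smult N A + f * B" using assms(1) unfolding pcong_def by blast
  have f: "f \<noteq> 0" using assms(2) by auto
  obtain Q R where QR: "pseudo_divmod A f = (Q, R)" by fastforce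
  have "A = f * Q + R" and R: "R = 0 \<or> degree R < degree f"
    using pseudo_divmod[OF f QR] assms(2) by auto
  then have eq: "p - q - smult N R = f * (smult N Q + B)"
    using AB by (simp add: algebra_simps smult_add_right)
  have "degree (p - q) < degree f"
    using assms(3,4) by (meson degree_diff_le_max le_less_trans max_less_iff_conj)
  moreover have "degree (smult N R) < degree f"
    using R assms(3) degree_smult_le[of N R] by auto
  ultimately have "degree (p - q - smult N R) < degree f"
    by (meson degree_diff_le_max le_less_trans max_less_iff_conj)
  then have "smult N Q + B = 0"
    unfolding eq using f by (metis degree_mult_eq le_add1 not_le mult_eq_0_iff)
  then have "p - q = smult N R" using eq by simp
  then have "coeff p i - coeff q i = N * coeff R i" by (metis coeff_diff coeff_smult)
  then show ?thesis by (simp add: cong_iff_dvd_diff)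
qed

lemma pcong_add_power_prime:
  assumes "prime N"
  shows "pcong N f ((p + q) ^ nat N) (p ^ nat N + q ^ nat N)"
proof -
  have "prime (nat N)" using assms by simp
  then obtain A where "(p + q) ^ nat N - p ^ nat N - q ^ nat N = of_nat (nat N) * A"
    using of_prime_dvd_add_power_diff by (blast elim: dvdE)
  moreover have "of_nat (nat N) * A = smult N A"
    using assms prime_ge_0_int by (simp add: of_nat_poly)
  ultimately have "(p + q) ^ nat N = p ^ nat N + q ^ nat N + smult N A"
    by (simp add: algebra_simps)
  then show ?thesis using pcong_add_smult_modulus by metis
qed

lemma pcong_const_power_prime: "prime N \<Longrightarrow> pcong N f ([:a:] ^ nat N) [:a:]"
  by (simp add: poly_const_pow pcong_const fermat_power_prime_int)

lemma odd_prime_not_dvd_2: "prime N \<Longrightarrow> odd N \<Longrightarrow> \<not> N dvd 2" for N :: int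
  by (metis coprime_right_2_iff_odd coprime_absorb_left not_prime_unit)

lemma pcong_X_power_prime:
  assumes "prime N" and "odd N" and disc: "[(e\<^sup>2 + 4 * k) ^ nat ((N - 1) div 2) = -1] (mod N)"
  shows "pcong N [:-k, -e, 1:] ([:0, 1:] ^ nat N) [:e, -1:]"
proof -
  define h where "h = nat ((N - 1) div 2)"
  define Y where "Y = [:-e, 2:]"
  let ?f = "[:-k, -e, 1:]"
  have N: "nat N = Suc (2 * h)"
    using assms(2) prime_gt_0_int[OF assms(1)] unfolding h_def by (auto elim!: oddE)
  have "Y\<^sup>2 = [:e\<^sup>2 + 4 * k:] + ?f * [:4:]"
    unfolding Y_def by (simp add: power2_eq_square algebra_simps)
  then have "pcong N ?f ((Y\<^sup>2) ^ h) ([:e\<^sup>2 + 4 * k:] ^ h)"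
    by (metis pcong_add_mult_modulus pcong_power)
  also have "pcong N ?f ([:e\<^sup>2 + 4 * k:] ^ h) [:-1:]"
    unfolding poly_const_pow h_def by (rule pcong_const[OF disc])
  finally have "pcong N ?f (Y * (Y\<^sup>2) ^ h) (Y * [:-1:])"
    by (rule pcong_mult[OF pcong_refl])
  then have Y: "pcong N ?f (Y ^ nat N) (-Y)"
    by (simp add: N power_mult)
  have "(Y + [:e:]) ^ nat N = smult (2 ^ nat N) ([:0, 1:] ^ nat N)"
    by (simp add: Y_def flip: smult_power)
  then have "pcong N ?f (smult (2 ^ nat N) ([:0, 1:] ^ nat N)) ((Y + [:e:]) ^ nat N)"
    by simp
  also have "pcong N ?f ((Y + [:e:]) ^ nat N) (Y ^ nat N + [:e:] ^ nat N)"
    by (rule pcong_add_power_prime[OF assms(1)])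
  also have "pcong N ?f (Y ^ nat N + [:e:] ^ nat N) (smult 2 [:e, -1:])"
    using pcong_add[OF Y pcong_const_power_prime[OF assms(1), where a = e]] by (simp add: Y_def)
  finally have "pcong N ?f (smult (2 ^ nat N) ([:0, 1:] ^ nat N)) (smult 2 [:e, -1:])" .
  moreover have "pcong N ?f (smult 2 ([:0, 1:] ^ nat N)) (smult (2 ^ nat N) ([:0, 1:] ^ nat N))"
    using pcong_mult[OF pcong_const[OF cong_sym[OF fermat_power_prime_int[OF assms(1), of 2]]]
        pcong_refl] by simp
  ultimately have "pcong N ?f (smult 2 ([:0, 1:] ^ nat N)) (smult 2 [:e, -1:])"
    by (rule pcong_trans[rotated])
  with assms(2) show ?thesis by (metis pcong_smult_cancel coprime_left_2_iff_odd)
qed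

lemma pcong_linear_power_prime:
  assumes "prime N" and "odd N" and "[(e\<^sup>2 + 4 * k) ^ nat ((N - 1) div 2) = -1] (mod N)"
  shows "pcong N [:-k, -e, 1:] ([:a, b:] ^ nat N) [:a + b * e, -b:]"
proof -
  have "[:a, b:] = [:a:] + [:b:] * [:0, 1:]" by simp
  then have "pcong N [:-k, -e, 1:] ([:a, b:] ^ nat N) ([:a:] ^ nat N + ([:b:] * [:0, 1:]) ^ nat N)"
    by (metis pcong_add_power_prime[OF assms(1)])
  also have "[:a:] ^ nat N + ([:b:] * [:0, 1:]) ^ nat N = [:a:] ^ nat N + [:b:] ^ nat N * [:0, 1:] ^ nat N"
    by (simp only: power_mult_distrib)
  also have "pcong N [:-k, -e, 1:] \<dots> ([:a:] + [:b:] * [:e, -1:])"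
    by (intro pcong_add pcong_mult pcong_const_power_prime pcong_X_power_prime assms)
  also have "[:a:] + [:b:] * [:e, -1:] = [:a + b * e, -b:]" by simp
  finally show ?thesis .
qed

lemma pcong_linear_power_prime_Suc:
  assumes "prime N" and "odd N" and "[(e\<^sup>2 + 4 * k) ^ nat ((N - 1) div 2) = -1] (mod N)"
  shows "pcong N [:-k, -e, 1:] ([:a, b:] ^ (nat N + 1)) [:a\<^sup>2 + e * a * b - k * b\<^sup>2:]"
proof -
  have "pcong N [:-k, -e, 1:] ([:a, b:] ^ nat N * [:a, b:]) ([:a + b * e, -b:] * [:a, b:])"
    by (rule pcong_mult[OF pcong_linear_power_prime[OF assms] pcong_refl])
  also have "[:a + b * e, -b:] * [:a, b:] = [:a\<^sup>2 + e * a * b - k * b\<^sup>2:] + [:-k, -e, 1:] * [:-(b\<^sup>2):]"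
    by (simp add: algebra_simps power2_eq_square)
  also have "pcong N [:-k, -e, 1:] \<dots> [:a\<^sup>2 + e * a * b - k * b\<^sup>2:]"
    by (rule pcong_add_mult_modulus)
  finally show ?thesis by simp
qed

lemma nonresidue_mult_square_cong_dvd:
  fixes N d b c :: int
  assumes "prime N" and "odd N" and "[d ^ nat ((N - 1) div 2) = -1] (mod N)"
    and "[d * b\<^sup>2 = c\<^sup>2] (mod N)"
  shows "N dvd c"
proof (rule ccontr)
  assume c: "\<not> N dvd c"
  define h where "h = nat ((N - 1) div 2)"
  have h: "nat N - 1 = 2 * h"
    using assms(2) prime_gt_0_int[OF assms(1)] unfolding h_def by (auto elim!: oddE)
  have b: "\<not> N dvd b"
  proof
    assume "N dvd b"
    then have "N dvd d * b\<^sup>2" by (simp add: power2_eq_square)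
    then have "N dvd c\<^sup>2" using cong_dvd_iff[OF assms(4)] by blast
    then show False using c assms(1) prime_dvd_power by blast
  qed
  have "[-1 * 1 = d ^ h * b ^ (nat N - 1)] (mod N)"
    using cong_mult[OF assms(3) fermat_theorem_int[OF assms(1) b]] unfolding h_def by (rule cong_sym)
  also have "d ^ h * b ^ (nat N - 1) = (d * b\<^sup>2) ^ h"
    unfolding h by (simp add: power_mult_distrib power_mult)
  also have "[(d * b\<^sup>2) ^ h = (c\<^sup>2) ^ h] (mod N)" using assms(4) by (rule cong_pow)
  also have "(c\<^sup>2) ^ h = c ^ (nat N - 1)" unfolding h by (simp add: power_mult)
  also have "[c ^ (nat N - 1) = 1] (mod N)" by (rule fermat_theorem_int[OF assms(1) c])
  finally have "N dvd 2" by (simp add: cong_iff_dvd_diff)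
  then show False using odd_prime_not_dvd_2 assms(1,2) by blast
qed

lemma pcong_linear_square_eq_one:
  assumes "prime N" and "odd N" and disc: "[(e\<^sup>2 + 4 * k) ^ nat ((N - 1) div 2) = -1] (mod N)"
    and "pcong N [:-k, -e, 1:] ([:a, b:] ^ 2) 1"
  shows "[b = 0] (mod N) \<and> [a\<^sup>2 = 1] (mod N)"
proof -
  let ?f = "[:-k, -e, 1:]" and ?r = "[:a\<^sup>2 + k * b\<^sup>2, 2 * a * b + e * b\<^sup>2:]"
  have "[:a, b:] ^ 2 = ?r + ?f * [:b\<^sup>2:]" by (simp add: algebra_simps power2_eq_square)
  then have "pcong N ?f ?r ([:a, b:] ^ 2)" by (metis pcong_add_mult_modulus pcong_sym)
  then have "pcong N ?f ?r [:1:]" using assms(4) pcong_trans by (simp add: one_pCons)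
  then have "[coeff ?r i = coeff [:1:] i] (mod N)" for i by (rule pcong_coeff) simp_all
  from this[of 0] this[of 1]
  have norm: "[a\<^sup>2 + k * b\<^sup>2 = 1] (mod N)" and "[b * (2 * a + e * b) = 0] (mod N)"
    by (simp_all add: algebra_simps power2_eq_square)
  then consider "N dvd b" | "N dvd 2 * a + e * b"
    using assms(1) prime_dvd_mult_iff by (auto simp: cong_0_iff)
  then show ?thesis
  proof cases
    case 1
    then have "[a\<^sup>2 + k * b\<^sup>2 = a\<^sup>2 + 0] (mod N)"
      by (intro cong_add) (simp_all add: cong_0_iff power2_eq_square)
    then show ?thesis using 1 norm by (metis add_0_right cong_0_iff cong_sym cong_trans)
  next
    case 2
    have "N dvd 4 * (a\<^sup>2 + k * b\<^sup>2 - 1) - (2 * a - e * b) * (2 * a + e * b)"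
      using norm 2 unfolding cong_iff_dvd_diff by (metis dvd_diff dvd_mult)
    also have "4 * (a\<^sup>2 + k * b\<^sup>2 - 1) - (2 * a - e * b) * (2 * a + e * b)
        = (e\<^sup>2 + 4 * k) * b\<^sup>2 - 2 ^ 2"
      by (simp add: algebra_simps power2_eq_square)
    finally have "[(e\<^sup>2 + 4 * k) * b\<^sup>2 = 2 ^ 2] (mod N)"
      by (simp add: cong_iff_dvd_diff)
    then have "N dvd 2" by (rule nonresidue_mult_square_cong_dvd[OF assms(1,2) disc])
    then show ?thesis using odd_prime_not_dvd_2 assms(1,2) by blast
  qed
qed

text \<open>The generator \<open>\<theta>\<close> of \<open>\<I>\<^sub>N(D)\<close> (\<open>\<surd>D\<close> or \<open>\<omega>\<close>) satisfies
  \<open>\<theta>\<^sup>2 = qtrace D \<cdot> \<theta> + qconst D\<close>.\<close>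

definition qtrace :: "int \<Rightarrow> int" where
  "qtrace D = (if D mod 4 = 1 then 1 else 0)"

definition qconst :: "int \<Rightarrow> int" where
  "qconst D = (if D mod 4 = 1 then (D - 1) div 4 else D)"

abbreviation qminpoly :: "int \<Rightarrow> int poly" where
  "qminpoly D \<equiv> [:- qconst D, - qtrace D, 1:]"

definition qelem_poly :: "qelem \<Rightarrow> int poly" where
  "qelem_poly x = [:fst x, snd x:]"

lemma qnorm_eq: "qnorm D (a, b) = a\<^sup>2 + qtrace D * a * b - qconst D * b\<^sup>2"
proof (cases "D mod 4 = 1")
  case True
  then have "(1 - D) div 4 = - ((D - 1) div 4)" by presburger
  then show ?thesis using True by (simp add: qnorm_def qtrace_def qconst_def)
qed (simp add: qnorm_def qtrace_def qconst_def)

lemma qdisc_power_half: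
  assumes "prime N" and "odd N" and "Legendre D N = -1"
  shows "[((qtrace D)\<^sup>2 + 4 * qconst D) ^ nat ((N - 1) div 2) = -1] (mod N)"
proof -
  define h where "h = nat ((N - 1) div 2)"
  have N: "2 < nat N" using prime_ge_2_int[OF assms(1)] assms(2) by (cases "N = 2") auto
  have "[Legendre D (int (nat N)) = D ^ ((nat N - 1) div 2)] (mod int (nat N))"
    using assms(1) N by (intro euler_criterion) simp_all
  moreover have "(nat N - 1) div 2 = h" unfolding h_def using N by (simp add: nat_div_distrib nat_diff_distrib)
  ultimately have D: "[D ^ h = -1] (mod N)"
    using assms(3) prime_ge_0_int[OF assms(1)] by (simp add: cong_sym)
  show ?thesis
  proof (cases "D mod 4 = 1")
    case True
    then have "(qtrace D)\<^sup>2 + 4 * qconst D = D" unfolding qtrace_def qconst_def by simp presburger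
    then show ?thesis using D unfolding h_def by simp
  next
    case False
    have "nat N - 1 = 2 * h" unfolding h_def using N assms(2) by (auto elim!: oddE)
    then have "((qtrace D)\<^sup>2 + 4 * qconst D) ^ h = 2 ^ (nat N - 1) * D ^ h"
      using False by (simp add: qtrace_def qconst_def power_mult_distrib power_mult)
    moreover have "[2 ^ (nat N - 1) * D ^ h = 1 * -1] (mod N)"
      using fermat_theorem_int[OF assms(1) odd_prime_not_dvd_2[OF assms(1,2)]] D by (rule cong_mult)
    ultimately show ?thesis unfolding h_def by simp
  qed
qed

lemma pcong_qred: "pcong N f (qelem_poly (qred N (a, b))) [:a, b:]"
proof -
  have "qelem_poly (qred N (a, b)) = [:a, b:] + smult N [:-(a div N), -(b div N):]"
    by (simp add: qelem_poly_def qred_def algebra_simps minus_mult_div_eq_mod[symmetric])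
  then show ?thesis using pcong_add_smult_modulus by metis
qed

lemma pcong_qmul: "pcong N (qminpoly D) (qelem_poly (qmul N D x y)) (qelem_poly x * qelem_poly y)"
proof -
  obtain a b c d where xy: "x = (a, b)" "y = (c, d)" by force
  let ?r = "[:a * c + qconst D * b * d, a * d + b * c + qtrace D * b * d:]"
  have "qmul N D x y = qred N (a * c + qconst D * b * d, a * d + b * c + qtrace D * b * d)"
    unfolding xy by (simp add: qmul_def qconst_def qtrace_def algebra_simps)
  then have "pcong N (qminpoly D) (qelem_poly (qmul N D x y)) ?r" by (simp add: pcong_qred)
  also have "?r = qelem_poly x * qelem_poly y + qminpoly D * [:-(b * d):]"
    unfolding xy qelem_poly_def by (simp add: algebra_simps)
  also have "pcong N (qminpoly D) \<dots> (qelem_poly x * qelem_poly y)"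
    by (rule pcong_add_mult_modulus)
  finally show ?thesis .
qed

lemma qone_eq: "1 < N \<Longrightarrow> qone N = (1, 0)"
  by (simp add: qone_def qred_def)

lemma qneg_one_eq: "1 < N \<Longrightarrow> qneg_one N = (N - 1, 0)"
  by (simp add: qneg_one_def qred_def zmod_minus1)

lemma pcong_qpow:
  assumes "1 < N"
  shows "pcong N (qminpoly D) (qelem_poly (qpow N D w n)) (qelem_poly w ^ n)"
proof (induction n)
  case 0
  then show ?case using assms by (simp add: qone_eq qelem_poly_def one_pCons)
next
  case (Suc n)
  have "pcong N (qminpoly D) (qelem_poly (qpow N D w (Suc n))) (qelem_poly w * qelem_poly (qpow N D w n))"
    by (simp add: pcong_qmul)
  also have "pcong N (qminpoly D) \<dots> (qelem_poly w * qelem_poly w ^ n)"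
    by (rule pcong_mult[OF pcong_refl Suc.IH])
  finally show ?case by simp
qed

lemma qred_in_qI: "0 < N \<Longrightarrow> qred N x \<in> qI N"
  by (simp add: qred_def qI_def)

lemma qmul_in_qI: "0 < N \<Longrightarrow> qmul N D x y \<in> qI N"
  by (simp add: qmul_def qred_in_qI split: prod.splits)

lemma qpow_in_qI: "0 < N \<Longrightarrow> qpow N D w n \<in> qI N"
  by (cases n) (simp_all add: qone_def qred_in_qI qmul_in_qI)

lemma qelem_eqI:
  assumes "x \<in> qI N" and "y \<in> qI N" and "pcong N f (qelem_poly x) (qelem_poly y)"
    and "lead_coeff f = 1" and "1 < degree f"
  shows "x = y"
proof -
  have "degree (qelem_poly z) < degree f" for z
    using assms(5) by (simp add: qelem_poly_def)
  then have "[coeff (qelem_poly x) i = coeff (qelem_poly y) i] (mod N)" for i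
    using pcong_coeff[OF assms(3,4)] by blast
  from this[of 0] this[of 1] show ?thesis
    using assms(1,2) by (auto simp: qelem_poly_def qI_def prod_eq_iff intro: cong_less_imp_eq_int)
qed

lemma qpow_add:
  assumes "1 < N"
  shows "qpow N D w (m + n) = qmul N D (qpow N D w m) (qpow N D w n)"
proof (rule qelem_eqI[where f = "qminpoly D"])
  have "pcong N (qminpoly D) (qelem_poly (qpow N D w (m + n))) (qelem_poly w ^ m * qelem_poly w ^ n)"
    unfolding power_add[symmetric] by (rule pcong_qpow[OF assms])
  also have "pcong N (qminpoly D) \<dots> (qelem_poly (qmul N D (qpow N D w m) (qpow N D w n)))"
    by (intro pcong_sym[OF pcong_trans[OF pcong_qmul]] pcong_mult pcong_qpow assms)
  finally show "pcong N (qminpoly D) (qelem_poly (qpow N D w (m + n)))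
      (qelem_poly (qmul N D (qpow N D w m) (qpow N D w n)))" .
qed (use assms in \<open>simp_all add: qpow_in_qI qmul_in_qI\<close>)

lemma qG_qpow_prime_Suc:
  assumes "prime N" and "odd N" and "Legendre D N = -1" and "w \<in> qG N D"
  shows "qpow N D w (nat N + 1) = qone N"
proof (rule qelem_eqI[where f = "qminpoly D"])
  obtain a b where w: "w = (a, b)" by force
  have N: "1 < N" using assms(1) prime_gt_1_int by blast
  have "pcong N (qminpoly D) (qelem_poly (qpow N D w (nat N + 1))) (qelem_poly w ^ (nat N + 1))"
    by (rule pcong_qpow[OF N])
  also have "qelem_poly w ^ (nat N + 1) = [:a, b:] ^ (nat N + 1)" by (simp add: w qelem_poly_def)
  also have "pcong N (qminpoly D) \<dots> [:qnorm D w:]"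
    unfolding w qnorm_eq
    by (rule pcong_linear_power_prime_Suc[OF assms(1,2) qdisc_power_half[OF assms(1-3)]])
  also have "pcong N (qminpoly D) [:qnorm D w:] [:1:]"
    using assms(4) by (intro pcong_const) (simp add: qG_def)
  finally show "pcong N (qminpoly D) (qelem_poly (qpow N D w (nat N + 1))) (qelem_poly (qone N))"
    using N by (simp add: qone_eq qelem_poly_def)
qed (use prime_gt_1_int[OF assms(1)] in \<open>simp_all add: qmul_in_qI qone_def qred_in_qI\<close>)

lemma qmul_self_eq_qone:
  assumes "prime N" and "odd N" and "Legendre D N = -1"
    and "x \<in> qI N" and "qmul N D x x = qone N"
  shows "x = qone N \<or> x = qneg_one N"
proof -
  obtain a b where x: "x = (a, b)" by force
  have N: "1 < N" using assms(1) prime_gt_1_int by blast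
  have "pcong N (qminpoly D) (qelem_poly (qone N)) (qelem_poly x * qelem_poly x)"
    using pcong_qmul[of N D x x] unfolding assms(5) .
  then have "pcong N (qminpoly D) 1 ([:a, b:] ^ 2)"
    using N by (simp add: x qone_eq qelem_poly_def one_pCons power2_eq_square)
  then have "pcong N (qminpoly D) ([:a, b:] ^ 2) 1" by (rule pcong_sym)
  then have b_cong: "[b = 0] (mod N)" and a_sq: "[a\<^sup>2 = 1] (mod N)"
    using pcong_linear_square_eq_one[OF assms(1,2) qdisc_power_half[OF assms(1-3)]] by blast+
  have range: "0 \<le> a" "a < N" "0 \<le> b" "b < N" using assms(4) by (simp_all add: x qI_def)
  have "b = 0" using b_cong range by (simp add: cong_less_imp_eq_int)
  have "a \<noteq> 0" using a_sq N by (auto simp: cong_def)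
  then have "[a = 1] (mod N) \<or> [a = -1] (mod N)"
    using cong_square[OF assms(1), of a] a_sq range by (simp add: power2_eq_square)
  moreover have "[-1 = N - 1] (mod N)" by (simp add: cong_iff_dvd_diff)
  ultimately have "[a = 1] (mod N) \<or> [a = N - 1] (mod N)" using cong_trans by blast
  then have "a = 1 \<or> a = N - 1" using range N by (auto intro: cong_less_imp_eq_int)
  then show ?thesis using N \<open>b = 0\<close> by (auto simp: x qone_eq qneg_one_eq)
qed

lemma square_root_chain:
  assumes "g s = a" and "\<And>r. r < s \<Longrightarrow> g (Suc r) = a \<Longrightarrow> g r = a \<or> g r = b"
  shows "g 0 = a \<or> (\<exists>r<s. g r = b)"
  using assms
proof (induction s)
  case (Suc s)
  then have "g s = a \<or> g s = b" by blast
  then show ?case using Suc.IH Suc.prems(2) less_Suc_eq by blast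
qed simp

theorem theorem1p4:
  fixes N D :: int and s u :: nat and w :: qelem
  assumes "prime N" and "odd N"
    and "squarefree D"
    and "Legendre D N = -1"
    and "N + 1 = 2 ^ s * int u" and "odd u" and "s \<ge> 1"
    and "w \<in> qG N D - {qone N, qneg_one N}"
  shows "qpow N D w u = qone N \<or>
         (\<exists>r<s. qpow N D w (2 ^ r * u) = qneg_one N)"
proof -
  have N: "1 < N" using assms(1) prime_gt_1_int by blast
  have "int (nat N + 1) = int (2 ^ s * u)" using assms(5) N by simp
  then have "nat N + 1 = 2 ^ s * u" by (simp only: of_nat_eq_iff)
  then have "qpow N D w (2 ^ s * u) = qone N"
    using qG_qpow_prime_Suc[OF assms(1,2,4)] assms(8) by simp
  moreover have "qpow N D w (2 ^ r * u) = qone N \<or> qpow N D w (2 ^ r * u) = qneg_one N"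
    if "qpow N D w (2 ^ Suc r * u) = qone N" for r
  proof (rule qmul_self_eq_qone[OF assms(1,2,4)])
    show "qpow N D w (2 ^ r * u) \<in> qI N" using N by (simp add: qpow_in_qI)
    have "2 ^ Suc r * u = 2 ^ r * u + 2 ^ r * u" by simp
    then show "qmul N D (qpow N D w (2 ^ r * u)) (qpow N D w (2 ^ r * u)) = qone N"
      using that qpow_add[OF N] by metis
  qed
  ultimately show ?thesis
    using square_root_chain[of "\<lambda>r. qpow N D w (2 ^ r * u)"] by simp
qed

end
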